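(* For every integer $j\ge 0$, $$\sum_{n=1}^{\infty}\frac{\binom{2n}{n}}{n\,4^n}\,\zeta_n^{\star}(\{2\}_j)=2\,\eta(2j+1).$$
   Context: For integers $n\ge1$ and $j\ge0$, the multiple harmonic star sum of depth $j$ and weight $2j$ is $\zeta_n^{\star}(\{2\}_j)=\sum_{n\ge k_1\ge\dots\ge k_j\ge1}\prod_{i=1}^j\frac{1}{k_i^2}$, with $\zeta_n^{\star}(\{2\}_0)=1$. $\eta$ denotes the Dirichlet eta function, $\eta(s)=\sum_{n=1}^\infty\frac{(-1)^{n-1}}{n^s}$, with $\eta(1)=\ln 2$. *)

theory Defs
  imports "HOL-Analysis.Analysis"
begin

definition star_tuples :: "nat \<Rightarrow> nat \<Rightarrow> nat list set" where
  "star_tuples n j = {ks. length ks = j \<and> set ks \<subseteq> {1..n} \<and> sorted_wrt (\<ge>) ks}"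

definition zeta_star2 :: "nat \<Rightarrow> nat \<Rightarrow> real" where
  "zeta_star2 n j = (\<Sum>ks\<in>star_tuples n j. \<Prod>i<j. 1 / (real (ks ! i))^2)"

definition dirichlet_eta :: "real \<Rightarrow> real" where
  "dirichlet_eta s = (\<Sum>n. (-1)^n / (real (n+1)) powr s)"

end

theory Submission
  imports Defs "HOL-Real_Asymp.Real_Asymp"
begin

(*
  Write c n = (2n choose n) / 4^n and w n k = (2n choose n+k) / (2n choose n).  Both sides of
  zeta_n^star({2}_j) = 2 sum_{k=1..n} (-1)^(k-1) w n k / k^(2j) equal 1 for j = 0 and satisfy
  Z n (j+1) = sum_{m=1..n} Z m j / m^2, so the N-th partial sum of the series is
  2 sum_{k=1..N} (-1)^(k-1) C N k / k^(2j), where C N k = sum_{n=1..N} F n k and F n k = c n * w n k / n.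
  With G n k = -2 (n-k) F n k one has (k+1) F n (k+1) - k F n k = G (n+1) k - G n k (a WZ pair);
  summing over n gives k * C N k = 1 + sum_{i<k} G (N+1) i, which tends to 1 since |G n i| <= 2 c n -> 0.
  As C N k is nonnegative and decreasing in k, Tannery's theorem for alternating series lets N -> oo
  be taken termwise, leaving 2 sum_k (-1)^(k-1) / k^(2j+1) = 2 eta(2j+1).
*)

section \<open>Central binomial coefficients\<close>

definition central_ratio :: "nat \<Rightarrow> real" where
  "central_ratio n = real ((2*n) choose n) / 4^n"

lemma central_ratio_pos: "central_ratio n > 0"
  unfolding central_ratio_def by simp

lemma central_ratio_fact: "central_ratio n = fact (2*n) / (fact n ^ 2 * 4^n)"
proof -
  have "real ((2*n) choose n) = fact (2*n) / (fact n * fact n)"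
    using binomial_fact[of n "2*n"] by (simp add: mult_2)
  then show ?thesis
    unfolding central_ratio_def by (simp add: power2_eq_square)
qed

lemma central_ratio_Suc:
  "central_ratio (Suc n) = central_ratio n * (2 * real n + 1) / (2 * (real n + 1))"
proof -
  have "fact (2 * Suc n) = (2 * real n + 2) * (2 * real n + 1) * fact (2*n)"
    by (simp add: algebra_simps)
  moreover have "fact (Suc n) = (real n + 1) * fact n"
    by (simp add: algebra_simps)
  ultimately show ?thesis
    unfolding central_ratio_fact by (simp add: divide_simps power2_eq_square) (simp add: algebra_simps)
qed

lemma central_ratio_sq_le: "central_ratio n ^ 2 \<le> 1 / (2 * real n + 1)"
proof (induction n)
  case 0
  then show ?case by (simp add: central_ratio_def)
next
  case (Suc n)
  have "central_ratio (Suc n) ^ 2 = central_ratio n ^ 2 * ((2 * real n + 1) / (2 * (real n + 1)))^2"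
    by (simp add: central_ratio_Suc power_mult_distrib power_divide)
  also have "\<dots> \<le> 1 / (2 * real n + 1) * ((2 * real n + 1) / (2 * (real n + 1)))^2"
    using Suc.IH by (rule mult_right_mono) simp
  also have "\<dots> \<le> 1 / (2 * real (Suc n) + 1)"
    by (simp add: divide_simps power2_eq_square) (simp add: algebra_simps)
  finally show ?case .
qed

lemma central_ratio_tendsto_0: "central_ratio \<longlonglongrightarrow> 0"
proof (rule real_tendsto_sandwich)
  show "\<forall>\<^sub>F n in sequentially. 0 \<le> central_ratio n"
    using central_ratio_pos by (simp add: less_imp_le)
  show "\<forall>\<^sub>F n in sequentially. central_ratio n \<le> sqrt (1 / (2 * real n + 1))"
    by (intro always_eventually allI real_le_rsqrt central_ratio_sq_le)
  show "(\<lambda>n. sqrt (1 / (2 * real n + 1))) \<longlonglongrightarrow> 0"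
    by real_asymp
qed simp

(* binom_weight n k = (2n choose n+k) / (2n choose n) *)
definition binom_weight :: "nat \<Rightarrow> nat \<Rightarrow> real" where
  "binom_weight n k = (if k \<le> n then fact n ^ 2 / (fact (n - k) * fact (n + k)) else 0)"

lemma binom_weight_0 [simp]: "binom_weight n 0 = 1"
  by (simp add: binom_weight_def power2_eq_square)

lemma binom_weight_eq_0 [simp]: "n < k \<Longrightarrow> binom_weight n k = 0"
  by (simp add: binom_weight_def)

lemma binom_weight_Suc_right:
  assumes "k \<le> n"
  shows "binom_weight n (Suc k) * (real n + real k + 1) = binom_weight n k * (real n - real k)"
proof (cases "k = n")
  case False
  with assms have "n - k = Suc (n - Suc k)" by simp
  then have "fact (n - k) = (real n - real k) * fact (n - Suc k)"
    using assms by (simp add: of_nat_diff)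
  then have w: "binom_weight n k = fact n ^ 2 / ((real n - real k) * (fact (n - Suc k) * fact (n + k)))"
    using assms by (simp add: binom_weight_def ac_simps)
  have w_Suc: "binom_weight n (Suc k) =
      fact n ^ 2 / ((real n + real k + 1) * (fact (n - Suc k) * fact (n + k)))"
    using assms False by (simp add: binom_weight_def algebra_simps)
  have "real n - real k \<noteq> 0" "real n + real k + 1 \<noteq> 0"
    using assms False by linarith+
  then show ?thesis
    unfolding w w_Suc by simp
qed simp

lemma binom_weight_Suc_left:
  assumes "k \<le> Suc n"
  shows "binom_weight (Suc n) k * ((real n + 1)^2 - (real k)^2) = binom_weight n k * (real n + 1)^2"
proof (cases "k = Suc n")
  case False
  with assms have "Suc n - k = Suc (n - k)" by simp
  then have "fact (Suc n - k) = (real n + 1 - real k) * fact (n - k)"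
    using assms False by (simp add: of_nat_diff algebra_simps)
  moreover have "fact (Suc n + k) = (real n + real k + 1) * fact (n + k)"
    by (simp add: algebra_simps)
  moreover have "fact (Suc n) = (real n + 1) * fact n"
    by (simp add: algebra_simps)
  ultimately have w_Suc: "binom_weight (Suc n) k = ((real n + 1) * fact n) ^ 2 /
      (((real n + 1 - real k) * (real n + real k + 1)) * (fact (n - k) * fact (n + k)))"
    using assms by (simp add: binom_weight_def ac_simps)
  have w: "binom_weight n k = fact n ^ 2 / (fact (n - k) * fact (n + k))"
    using assms False by (simp add: binom_weight_def)
  have diff: "(real n + 1)^2 - (real k)^2 = (real n + 1 - real k) * (real n + real k + 1)"
    by (simp add: power2_eq_square algebra_simps)
  have "real n + 1 - real k \<noteq> 0" "real n + real k + 1 \<noteq> 0"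
    using assms False by linarith+
  then show ?thesis
    unfolding w w_Suc diff by (simp add: power_mult_distrib)
qed simp

lemma binom_weight_nonneg: "binom_weight n k \<ge> 0"
  by (simp add: binom_weight_def)

lemma decseq_binom_weight: "decseq (binom_weight n)"
  unfolding decseq_Suc_iff
proof
  fix k
  show "binom_weight n (Suc k) \<le> binom_weight n k"
  proof (cases "k < n")
    case True
    then have "binom_weight n (Suc k) = binom_weight n k * ((real n - real k) / (real n + real k + 1))"
      using binom_weight_Suc_right[of k n] by (simp add: field_simps)
    also have "\<dots> \<le> binom_weight n k * 1"
      using True binom_weight_nonneg by (intro mult_left_mono) simp_all
    finally show ?thesis by simp
  qed (simp add: binom_weight_nonneg)
qed

lemma binom_weight_le_1: "binom_weight n k \<le> 1"
  using decseqD[OF decseq_binom_weight, of 0 k] by simp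

section \<open>Star sums as alternating binomial sums\<close>

lemma star_tuples_0: "star_tuples n 0 = {[]}"
  unfolding star_tuples_def by auto

lemma finite_star_tuples: "finite (star_tuples n j)"
proof (rule finite_subset)
  show "star_tuples n j \<subseteq> {ks. set ks \<subseteq> {1..n} \<and> length ks = j}"
    unfolding star_tuples_def by auto
qed (simp add: finite_lists_length_eq)

lemma star_tuples_Suc:
  "star_tuples n (Suc j) = (\<lambda>(m, ks). m # ks) ` (SIGMA m:{1..n}. star_tuples m j)"
proof
  show "star_tuples n (Suc j) \<subseteq> (\<lambda>(m, ks). m # ks) ` (SIGMA m:{1..n}. star_tuples m j)"
  proof
    fix ks assume "ks \<in> star_tuples n (Suc j)"
    then obtain m ks' where "ks = m # ks'" "m \<in> {1..n}" "ks' \<in> star_tuples m j"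
      unfolding star_tuples_def by (cases ks) (auto simp: subset_iff)
    then show "ks \<in> (\<lambda>(m, ks). m # ks) ` (SIGMA m:{1..n}. star_tuples m j)"
      by force
  qed
qed (unfold star_tuples_def, fastforce)

lemma zeta_star2_0: "zeta_star2 n 0 = 1"
  unfolding zeta_star2_def star_tuples_0 by simp

lemma zeta_star2_Suc: "zeta_star2 n (Suc j) = (\<Sum>m=1..n. zeta_star2 m j / (real m)^2)"
proof -
  have inj: "inj_on (\<lambda>(m, ks). m # ks) (SIGMA m:{1..n}. star_tuples m j)"
    by (auto simp: inj_on_def)
  have "zeta_star2 n (Suc j) =
      (\<Sum>(m, ks)\<in>(SIGMA m:{1..n}. star_tuples m j). \<Prod>i<Suc j. 1 / (real ((m # ks) ! i))^2)"
    unfolding zeta_star2_def star_tuples_Suc sum.reindex[OF inj] by (simp add: case_prod_beta)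
  also have "\<dots> = (\<Sum>m=1..n. \<Sum>ks\<in>star_tuples m j. \<Prod>i<Suc j. 1 / (real ((m # ks) ! i))^2)"
    by (rule sum.Sigma[symmetric]) (auto simp: finite_star_tuples)
  also have "\<dots> = (\<Sum>m=1..n. \<Sum>ks\<in>star_tuples m j. 1 / (real m)^2 * (\<Prod>i<j. 1 / (real (ks ! i))^2))"
    by (simp only: prod.lessThan_Suc_shift nth_Cons_0 nth_Cons_Suc)
  also have "\<dots> = (\<Sum>m=1..n. zeta_star2 m j / (real m)^2)"
    unfolding zeta_star2_def by (simp add: sum_divide_distrib)
  finally show ?thesis .
qed

definition alt_weight_sum :: "nat \<Rightarrow> nat \<Rightarrow> real" where
  "alt_weight_sum n j = 2 * (\<Sum>k=1..n. (-1)^(k-1) * binom_weight n k / real k ^ (2*j))"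

lemma alt_weight_sum_0:
  assumes "n \<ge> 1"
  shows "alt_weight_sum n 0 = 1"
proof -
  define v where "v k = binom_weight n k * (real n + real k) / (2 * real n)" for k
  \<comment> \<open>v k = (2n-1 choose n+k-1) / (2n choose n), so the next fact is Pascal's rule\<close>
  have pascal: "binom_weight n k = v k + v (Suc k)" if "k \<le> n" for k
  proof -
    have "v (Suc k) = binom_weight n (Suc k) * (real n + real k + 1) / (2 * real n)"
      by (simp add: v_def add_ac)
    also have "\<dots> = binom_weight n k * (real n - real k) / (2 * real n)"
      by (simp only: binom_weight_Suc_right[OF that])
    finally have v_Suc: "v (Suc k) = binom_weight n k * (real n - real k) / (2 * real n)" .
    show ?thesis
      using assms unfolding v_Suc by (simp add: v_def field_simps)
  qed
  define u where "u k = (-1)^k * v k" for k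
  have "(-1)^(k-1) * binom_weight n k = u (Suc k) - u k" if "k \<in> {1..n}" for k
  proof -
    have "(-1::real) ^ (k - 1) = - ((-1) ^ k)"
      using that by (simp add: power_eq_if)
    moreover have "binom_weight n k = v k + v (Suc k)"
      using that by (simp add: pascal)
    ultimately show ?thesis
      unfolding u_def by (simp add: algebra_simps)
  qed
  then have "(\<Sum>k=1..n. (-1)^(k-1) * binom_weight n k) = (\<Sum>k=1..n. u (Suc k) - u k)"
    by (rule sum.cong[OF refl])
  also have "\<dots> = u (Suc n) - u 1"
    by (rule sum_Suc_diff) simp
  also have "\<dots> = 1/2"
    using pascal[of 0] assms by (simp add: u_def v_def field_simps)
  finally show ?thesis
    by (simp add: alt_weight_sum_def)
qed

lemma alt_weight_sum_Suc_Suc: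
  "alt_weight_sum (Suc m) (Suc j) = alt_weight_sum m (Suc j) + alt_weight_sum (Suc m) j / (real m + 1)^2"
proof -
  have termwise: "(-1)^(k-1) * binom_weight (Suc m) k / real k ^ (2 * Suc j)
      - (-1)^(k-1) * binom_weight m k / real k ^ (2 * Suc j)
      = (-1)^(k-1) * binom_weight (Suc m) k / real k ^ (2*j) / (real m + 1)^2"
    if k: "k \<in> {1..Suc m}" for k
  proof -
    have w: "binom_weight m k = binom_weight (Suc m) k * (1 - (real k)^2 / (real m + 1)^2)"
      using binom_weight_Suc_left[of k m] k by (simp add: field_simps)
    have "real k ^ (2 * Suc j) = real k ^ (2*j) * (real k)^2"
      by (simp add: power_add power2_eq_square)
    then show ?thesis
      unfolding w using k by (simp add: field_simps)
  qed
  have "alt_weight_sum m (Suc j) = 2 * (\<Sum>k=1..Suc m. (-1)^(k-1) * binom_weight m k / real k ^ (2 * Suc j))"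
    by (simp add: alt_weight_sum_def)
  then have "alt_weight_sum (Suc m) (Suc j) - alt_weight_sum m (Suc j) =
      2 * (\<Sum>k=1..Suc m. (-1)^(k-1) * binom_weight (Suc m) k / real k ^ (2 * Suc j)
        - (-1)^(k-1) * binom_weight m k / real k ^ (2 * Suc j))"
    by (simp add: alt_weight_sum_def sum_subtractf algebra_simps)
  also have "\<dots> = 2 * (\<Sum>k=1..Suc m. (-1)^(k-1) * binom_weight (Suc m) k / real k ^ (2*j) / (real m + 1)^2)"
    using termwise by (intro arg_cong[where f="\<lambda>x. 2 * x"] sum.cong) auto
  also have "\<dots> = alt_weight_sum (Suc m) j / (real m + 1)^2"
    unfolding alt_weight_sum_def sum_divide_distrib[symmetric] by simp
  finally show ?thesis
    by simp
qed

lemma alt_weight_sum_Suc: "alt_weight_sum n (Suc j) = (\<Sum>m=1..n. alt_weight_sum m j / (real m)^2)"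
proof (induction n)
  case 0
  then show ?case by (simp add: alt_weight_sum_def)
next
  case (Suc n)
  then show ?case by (simp add: alt_weight_sum_Suc_Suc add.commute)
qed

lemma zeta_star2_eq_alt_weight_sum: "n \<ge> 1 \<Longrightarrow> zeta_star2 n j = alt_weight_sum n j"
proof (induction j arbitrary: n)
  case 0
  then show ?case
    by (simp add: zeta_star2_0 alt_weight_sum_0)
next
  case (Suc j)
  then show ?case
    unfolding zeta_star2_Suc alt_weight_sum_Suc by (intro sum.cong) auto
qed

section \<open>A WZ pair and its column sums\<close>

definition wz_F :: "nat \<Rightarrow> nat \<Rightarrow> real" where
  "wz_F n k = central_ratio n * binom_weight n k / real n"

definition wz_G :: "nat \<Rightarrow> nat \<Rightarrow> real" where
  "wz_G n k = -2 * (real n - real k) * wz_F n k"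

lemma wz_F_nonneg: "wz_F n k \<ge> 0"
  unfolding wz_F_def using central_ratio_pos binom_weight_nonneg by (simp add: less_imp_le)

lemma decseq_wz_F: "decseq (wz_F n)"
  unfolding wz_F_def decseq_def
  using decseqD[OF decseq_binom_weight] central_ratio_pos[of n]
  by (auto intro!: divide_right_mono mult_left_mono)

lemma wz_F_Suc_right:
  assumes "k \<le> n"
  shows "wz_F n (Suc k) = wz_F n k * ((real n - real k) / (real n + real k + 1))"
proof -
  have "real n + real k + 1 \<noteq> 0"
    by linarith
  then have "binom_weight n (Suc k) = binom_weight n k * (real n - real k) / (real n + real k + 1)"
    using binom_weight_Suc_right[OF assms] by (simp add: eq_divide_eq)
  then show ?thesis
    unfolding wz_F_def by (simp add: ac_simps)
qed

lemma wz_G_Suc_left: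
  assumes "n \<ge> 1" and "k \<le> n"
  shows "wz_G (Suc n) k = wz_F n k * (- real n * (2 * real n + 1) / (real n + real k + 1))"
proof -
  have nonzero: "real n \<noteq> 0" "real n + 1 - real k \<noteq> 0" "real n + real k + 1 \<noteq> 0" "real n + 1 \<noteq> 0"
    using assms by linarith+
  have "(real n + 1)^2 - (real k)^2 = (real n + 1 - real k) * (real n + real k + 1)"
    by (simp add: power2_eq_square algebra_simps)
  then have w_Suc: "binom_weight (Suc n) k =
      binom_weight n k * (real n + 1)^2 / ((real n + 1 - real k) * (real n + real k + 1))"
    using binom_weight_Suc_left[of k n] assms nonzero by (simp add: eq_divide_eq)
  have "wz_G (Suc n) k = -2 * (real n + 1 - real k) * (central_ratio n * (2 * real n + 1) / (2 * (real n + 1))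
      * (binom_weight n k * (real n + 1)^2 / ((real n + 1 - real k) * (real n + real k + 1))) / (real n + 1))"
    unfolding wz_G_def wz_F_def central_ratio_Suc w_Suc by (simp add: add_ac)
  moreover have "-2 * a * (c * (2 * x + 1) / (2 * y) * (w * y^2 / (a * b)) / y) = c * w / x * (- x * (2 * x + 1) / b)"
    if "a \<noteq> 0" "b \<noteq> 0" "x \<noteq> 0" "y \<noteq> 0" for a b c w x y :: real
    using that by (simp add: field_simps power2_eq_square)
  ultimately show ?thesis
    unfolding wz_F_def using nonzero by metis
qed

lemma wz_pair:
  assumes "n \<ge> 1"
  shows "(real k + 1) * wz_F n (Suc k) - real k * wz_F n k = wz_G (Suc n) k - wz_G n k"
proof (cases "k \<le> n")
  case True
  define r where "r = (real n - real k) / (real n + real k + 1)"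
  define s where "s = - real n * (2 * real n + 1) / (real n + real k + 1)"
  have "real n + real k + 1 \<noteq> 0"
    by linarith
  then have "(real k + 1) * r - real k = s + 2 * (real n - real k)"
    unfolding r_def s_def by (simp add: field_simps)
  then have "wz_F n k * ((real k + 1) * r - real k) = wz_F n k * (s + 2 * (real n - real k))"
    by simp
  then show ?thesis
    unfolding wz_F_Suc_right[OF True] wz_G_Suc_left[OF assms True] r_def[symmetric] s_def[symmetric]
    by (simp add: wz_G_def algebra_simps)
next
  case False
  then show ?thesis
    by (cases "k = Suc n") (simp_all add: wz_G_def wz_F_def)
qed

lemma wz_G_1: "wz_G 1 k = (if k = 0 then -1 else 0)"
proof -
  have "central_ratio 1 = 1/2"
    by (simp add: central_ratio_def)
  then show ?thesis
    by (cases "k = 0"; cases "k = 1") (simp_all add: wz_G_def wz_F_def)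
qed

lemma abs_wz_G_le: "\<bar>wz_G n k\<bar> \<le> 2 * central_ratio n"
proof (cases "k \<le> n \<and> n \<noteq> 0")
  case True
  have "\<bar>wz_G n k\<bar> = 2 * ((real n - real k) / real n) * central_ratio n * binom_weight n k"
    using True central_ratio_pos[of n] binom_weight_nonneg[of n k]
    by (simp add: wz_G_def wz_F_def abs_mult)
  also have "\<dots> \<le> 2 * 1 * central_ratio n * 1"
    using True central_ratio_pos[of n] binom_weight_nonneg[of n k] binom_weight_le_1[of n k]
    by (intro mult_mono) simp_all
  finally show ?thesis by simp
next
  case False
  then show ?thesis
    using central_ratio_pos[of n] by (auto simp: wz_G_def wz_F_def not_le)
qed

definition column_sum :: "nat \<Rightarrow> nat \<Rightarrow> real" where
  "column_sum k N = (\<Sum>n=1..N. wz_F n k)"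

lemma column_sum_nonneg: "column_sum k N \<ge> 0"
  unfolding column_sum_def by (simp add: sum_nonneg wz_F_nonneg)

lemma decseq_column_sum: "decseq (\<lambda>k. column_sum k N)"
  unfolding column_sum_def decseq_def using decseqD[OF decseq_wz_F] by (simp add: sum_mono)

lemma column_sum_eq: "real (Suc k) * column_sum (Suc k) N = 1 + (\<Sum>i\<le>k. wz_G (Suc N) i)"
proof -
  have telescope: "real (Suc i) * column_sum (Suc i) N - real i * column_sum i N
      = wz_G (Suc N) i - wz_G 1 i" for i
  proof -
    have "real (Suc i) * column_sum (Suc i) N - real i * column_sum i N
        = (\<Sum>n=1..N. (real i + 1) * wz_F n (Suc i) - real i * wz_F n i)"
      unfolding column_sum_def by (simp add: sum_distrib_left sum_subtractf algebra_simps)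
    also have "\<dots> = (\<Sum>n=1..N. wz_G (Suc n) i - wz_G n i)"
      by (intro sum.cong refl wz_pair) simp
    also have "\<dots> = wz_G (Suc N) i - wz_G 1 i"
      by (rule sum_Suc_diff) simp
    finally show ?thesis .
  qed
  show ?thesis
  proof (induction k)
    case 0
    show ?case
      using telescope[of 0] wz_G_1[of 0] by simp
  next
    case (Suc k)
    then show ?case
      using telescope[of "Suc k"] wz_G_1[of "Suc k"] by simp
  qed
qed

lemma column_sum_tendsto: "(\<lambda>N. column_sum (Suc k) N) \<longlonglongrightarrow> 1 / real (Suc k)"
proof -
  have "(\<lambda>N. wz_G (Suc N) i) \<longlonglongrightarrow> 0" for i
  proof (rule Lim_null_comparison)
    show "\<forall>\<^sub>F N in sequentially. norm (wz_G (Suc N) i) \<le> 2 * central_ratio (Suc N)"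
      by (simp add: abs_wz_G_le)
    show "(\<lambda>N. 2 * central_ratio (Suc N)) \<longlonglongrightarrow> 0"
      using tendsto_mult_right_zero[OF LIMSEQ_Suc[OF central_ratio_tendsto_0], of 2] by simp
  qed
  then have "(\<lambda>N. (1 + (\<Sum>i\<le>k. wz_G (Suc N) i)) / real (Suc k)) \<longlonglongrightarrow> (1 + 0) / real (Suc k)"
    by (intro tendsto_intros tendsto_null_sum) simp_all
  moreover have "column_sum (Suc k) N = (1 + (\<Sum>i\<le>k. wz_G (Suc N) i)) / real (Suc k)" for N
    using column_sum_eq[of k N] by (simp add: field_simps)
  ultimately show ?thesis
    by simp
qed

lemma sum_central_ratio_zeta_star2:
  "(\<Sum>n=1..N. central_ratio n / real n * zeta_star2 n j)
    = 2 * (\<Sum>k<N. (-1)^k * (column_sum (Suc k) N / real (Suc k) ^ (2*j)))"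
proof -
  have "(\<Sum>n=1..N. central_ratio n / real n * zeta_star2 n j)
      = (\<Sum>n=1..N. central_ratio n / real n * alt_weight_sum n j)"
    by (intro sum.cong refl) (simp add: zeta_star2_eq_alt_weight_sum)
  also have "\<dots> = (\<Sum>n=1..N. 2 * (\<Sum>k=1..N. (-1)^(k-1) * wz_F n k / real k ^ (2*j)))"
  proof (intro sum.cong refl)
    fix n assume n: "n \<in> {1..N}"
    have "central_ratio n / real n * alt_weight_sum n j
        = 2 * (\<Sum>k=1..n. (-1)^(k-1) * wz_F n k / real k ^ (2*j))"
      unfolding alt_weight_sum_def wz_F_def by (simp add: sum_distrib_left ac_simps)
    also have "(\<Sum>k=1..n. (-1)^(k-1) * wz_F n k / real k ^ (2*j))
        = (\<Sum>k=1..N. (-1)^(k-1) * wz_F n k / real k ^ (2*j))"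
      using n by (intro sum.mono_neutral_left) (auto simp: wz_F_def)
    finally show "central_ratio n / real n * alt_weight_sum n j
        = 2 * (\<Sum>k=1..N. (-1)^(k-1) * wz_F n k / real k ^ (2*j))" .
  qed
  also have "\<dots> = 2 * (\<Sum>k=1..N. (-1)^(k-1) * (column_sum k N / real k ^ (2*j)))"
    unfolding column_sum_def sum_distrib_left[symmetric]
    by (subst sum.swap) (simp add: sum_distrib_left sum_divide_distrib)
  also have "\<dots> = 2 * (\<Sum>k<N. (-1)^k * (column_sum (Suc k) N / real (Suc k) ^ (2*j)))"
    using sum.atLeast1_atMost_eq[of "\<lambda>k. (-1)^(k-1) * (column_sum k N / real k ^ (2*j))" N] by simp
  finally show ?thesis .
qed

section \<open>Tannery's theorem for alternating series\<close>

lemma alternating_sum_bounds: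
  fixes f :: "nat \<Rightarrow> real"
  assumes "decseq f" and "\<And>k. f k \<ge> 0"
  shows "0 \<le> (\<Sum>k<m. (-1)^k * f k) \<and> (\<Sum>k<m. (-1)^k * f k) \<le> f 0"
  using assms
proof (induction m arbitrary: f)
  case 0
  then show ?case by simp
next
  case (Suc m)
  have "decseq (\<lambda>k. f (Suc k))"
    using Suc.prems(1) by (simp add: decseq_Suc_iff)
  then have IH: "0 \<le> (\<Sum>k<m. (-1)^k * f (Suc k))" "(\<Sum>k<m. (-1)^k * f (Suc k)) \<le> f 1"
    using Suc.IH Suc.prems(2) by auto
  have "(\<Sum>k<Suc m. (-1)^k * f k) = f 0 - (\<Sum>k<m. (-1)^k * f (Suc k))"
    by (simp only: sum.lessThan_Suc_shift) (simp add: sum_negf)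
  moreover have "f 1 \<le> f 0"
    using Suc.prems(1) by (simp add: decseq_def)
  ultimately show ?case
    using IH by linarith
qed

lemma abs_alternating_sum_tail_le:
  fixes f :: "nat \<Rightarrow> real"
  assumes "decseq f" and "\<And>k. f k \<ge> 0"
  shows "\<bar>\<Sum>k\<in>{L..<N}. (-1)^k * f k\<bar> \<le> f L"
proof -
  have "decseq (\<lambda>k. f (L + k))"
    using assms(1) by (simp add: decseq_def)
  then have "\<bar>\<Sum>k<N - L. (-1)^k * f (L + k)\<bar> \<le> f L"
    using alternating_sum_bounds[of "\<lambda>k. f (L + k)" "N - L"] assms(2) by auto
  moreover have "(\<Sum>k\<in>{L..<N}. (-1)^k * f k) = (-1)^L * (\<Sum>k<N - L. (-1)^k * f (L + k))"
    by (simp add: sum.atLeastLessThan_shift_0[of _ L N] lessThan_atLeast0 sum_distrib_left power_add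
        ac_simps)
  ultimately show ?thesis
    by (simp add: abs_mult)
qed

lemma abs_alternating_sum_diff_le:
  fixes f :: "nat \<Rightarrow> real"
  assumes "decseq f" and "\<And>k. f k \<ge> 0" and "L \<le> N"
  shows "\<bar>(\<Sum>k<N. (-1)^k * f k) - s\<bar> \<le> \<bar>(\<Sum>k<L. (-1)^k * f k) - t\<bar> + f L + \<bar>t - s\<bar>"
proof -
  have "(\<Sum>k<N. (-1)^k * f k) = (\<Sum>k<L. (-1)^k * f k) + (\<Sum>k\<in>{L..<N}. (-1)^k * f k)"
    using assms(3) by (simp add: lessThan_atLeast0 sum.atLeastLessThan_concat)
  then show ?thesis
    using abs_alternating_sum_tail_le[OF assms(1,2), of L N] by linarith
qed

text \<open>No domination is needed: the alternating tail beyond L is bounded by f N L, which tends to g L.\<close>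
lemma tendsto_alternating_sum_Tannery:
  fixes f :: "nat \<Rightarrow> nat \<Rightarrow> real" and g :: "nat \<Rightarrow> real"
  assumes decseq: "\<And>N. decseq (f N)" and nonneg: "\<And>N k. f N k \<ge> 0"
    and lim: "\<And>k. (\<lambda>N. f N k) \<longlonglongrightarrow> g k" and g_0: "g \<longlonglongrightarrow> 0"
  shows "(\<lambda>N. \<Sum>k<N. (-1)^k * f N k) \<longlonglongrightarrow> (\<Sum>k. (-1)^k * g k)"
proof (rule LIMSEQ_I)
  fix \<epsilon> :: real
  assume "\<epsilon> > 0"
  have "g k \<ge> 0" for k
    using lim by (rule LIMSEQ_le_const) (use nonneg in auto)
  moreover have "g (Suc k) \<le> g k" for k
    using lim lim by (rule LIMSEQ_le) (use decseq in \<open>auto simp: decseq_Suc_iff\<close>)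
  ultimately have "(\<lambda>L. \<Sum>k<L. (-1)^k * g k) \<longlonglongrightarrow> (\<Sum>k. (-1)^k * g k)"
    using summable_Leibniz'(1)[OF g_0] by (simp add: summable_LIMSEQ)
  then have "\<forall>\<^sub>F L in sequentially. g L < \<epsilon>/4 \<and> dist (\<Sum>k<L. (-1)^k * g k) (\<Sum>k. (-1)^k * g k) < \<epsilon>/4"
    using \<open>\<epsilon> > 0\<close> by (intro eventually_conj order_tendstoD(2)[OF g_0] tendstoD) simp_all
  then obtain L where
    L: "g L < \<epsilon>/4" "\<bar>(\<Sum>k<L. (-1)^k * g k) - (\<Sum>k. (-1)^k * g k)\<bar> < \<epsilon>/4"
    by (auto simp: eventually_sequentially dist_real_def)
  have "(\<lambda>N. \<Sum>k<L. (-1)^k * f N k) \<longlonglongrightarrow> (\<Sum>k<L. (-1)^k * g k)"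
    by (intro tendsto_intros lim)
  then have "\<forall>\<^sub>F N in sequentially. L \<le> N \<and> f N L < \<epsilon>/2 \<and>
      dist (\<Sum>k<L. (-1)^k * f N k) (\<Sum>k<L. (-1)^k * g k) < \<epsilon>/4"
    using \<open>\<epsilon> > 0\<close> L(1)
    by (intro eventually_conj eventually_ge_at_top order_tendstoD(2)[OF lim] tendstoD) simp_all
  then obtain N0 where N0: "\<And>N. N \<ge> N0 \<Longrightarrow> L \<le> N \<and> f N L < \<epsilon>/2 \<and>
      \<bar>(\<Sum>k<L. (-1)^k * f N k) - (\<Sum>k<L. (-1)^k * g k)\<bar> < \<epsilon>/4"
    by (auto simp: eventually_sequentially dist_real_def)
  have "norm ((\<Sum>k<N. (-1)^k * f N k) - (\<Sum>k. (-1)^k * g k)) < \<epsilon>" if "N \<ge> N0" for N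
    using abs_alternating_sum_diff_le[OF decseq[of N] nonneg[of N],
        where L = L and N = N and s = "\<Sum>k. (-1)^k * g k" and t = "\<Sum>k<L. (-1)^k * g k"]
      N0[OF that] L(2)
    by auto
  then show "\<exists>N0. \<forall>N\<ge>N0. norm ((\<Sum>k<N. (-1)^k * f N k) - (\<Sum>k. (-1)^k * g k)) < \<epsilon>"
    by blast
qed

lemma tendsto_alternating_column_sums:
  "(\<lambda>N. \<Sum>k<N. (-1)^k * (column_sum (Suc k) N / real (Suc k) ^ q))
    \<longlonglongrightarrow> (\<Sum>k. (-1)^k * (1 / real (Suc k) ^ Suc q))"
proof (rule tendsto_alternating_sum_Tannery)
  show "decseq (\<lambda>k. column_sum (Suc k) N / real (Suc k) ^ q)" for N
    using decseq_column_sum[of N] column_sum_nonneg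
    by (auto simp: decseq_Suc_iff intro!: frac_le power_mono)
  show "column_sum (Suc k) N / real (Suc k) ^ q \<ge> 0" for N k
    using column_sum_nonneg by simp
  show "(\<lambda>N. column_sum (Suc k) N / real (Suc k) ^ q) \<longlonglongrightarrow> 1 / real (Suc k) ^ Suc q" for k
    using column_sum_tendsto[of k] by (auto intro!: tendsto_eq_intros)
  have "(\<lambda>k. inverse (real (Suc k)) ^ Suc q) \<longlonglongrightarrow> 0 ^ Suc q"
    by (intro tendsto_power LIMSEQ_inverse_real_of_nat)
  then show "(\<lambda>k. 1 / real (Suc k) ^ Suc q) \<longlonglongrightarrow> 0"
    by (simp add: power_inverse divide_inverse)
qed

lemma dirichlet_eta_of_nat: "dirichlet_eta (real p) = (\<Sum>k. (-1)^k * (1 / real (Suc k) ^ p))"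
  unfolding dirichlet_eta_def by (simp add: powr_realpow)

theorem mainTheorem12:
  fixes j :: nat
  shows "(\<lambda>n. real ((2*(n+1)) choose (n+1)) / (real (n+1) * 4^(n+1)) * zeta_star2 (n+1) j)
           sums (2 * dirichlet_eta (2 * real j + 1))"
proof -
  have partial_sums:
    "(\<Sum>n<N. real ((2*(n+1)) choose (n+1)) / (real (n+1) * 4^(n+1)) * zeta_star2 (n+1) j)
      = 2 * (\<Sum>k<N. (-1)^k * (column_sum (Suc k) N / real (Suc k) ^ (2*j)))" for N
  proof -
    have "(\<Sum>n<N. real ((2*(n+1)) choose (n+1)) / (real (n+1) * 4^(n+1)) * zeta_star2 (n+1) j)
        = (\<Sum>n<N. central_ratio (Suc n) / real (Suc n) * zeta_star2 (Suc n) j)"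
      by (intro sum.cong refl) (simp add: central_ratio_def)
    also have "\<dots> = (\<Sum>n=1..N. central_ratio n / real n * zeta_star2 n j)"
      using sum.atLeast1_atMost_eq[of "\<lambda>n. central_ratio n / real n * zeta_star2 n j" N] by simp
    finally show ?thesis
      unfolding sum_central_ratio_zeta_star2 .
  qed
  have "dirichlet_eta (2 * real j + 1) = (\<Sum>k. (-1)^k * (1 / real (Suc k) ^ Suc (2*j)))"
    using dirichlet_eta_of_nat[of "Suc (2*j)"] by (simp add: add.commute)
  then show ?thesis
    unfolding sums_def partial_sums
    using tendsto_mult_left[OF tendsto_alternating_column_sums, of 2 "2*j"] by simp
qed

end
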